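(* Let $\mu$ be a positive, finite, continuous (i.e. atomless) Borel measure on $\mathbb{R}^n$ and $\nu$ a positive, finite, continuous Borel measure on $\mathbb{R}^m$, and assume that each of $L^2(\mu)$ and $L^2(\nu)$ admits a Fourier frame. Define the measure $\rho=\mu\times\delta_0+\delta_0\times\nu$ on $\mathbb{R}^{n+m}=\mathbb{R}^n\times\mathbb{R}^m$, i.e. $$\int_{\mathbb{R}^n\times\mathbb{R}^m} f(x,y)\,d\rho(x,y)=\int_{\mathbb{R}^n} f(x,0)\,d\mu(x)+\int_{\mathbb{R}^m} f(0,y)\,d\nu(y)$$ for every continuous compactly supported $f$. Then $L^2(\rho)$ admits a Fourier frame.
   Context: For $\lambda\in\mathbb{R}^d$ let $e_\lambda(x)=e^{2\pi i\langle\lambda,x\rangle}$. For a positive finite Borel measure $\mu$ on $\mathbb{R}^d$ and a countable set $\Lambda\subset\mathbb{R}^d$, the system $E(\Lambda)=\{e_\lambda\}_{\lambda\in\Lambda}$ is a Fourier frame for $L^2(\mu)$ if there are constants $0<A,B<\infty$ with $A\|f\|^2_{L^2(\mu)}\le\sum_{\lambda\in\Lambda}|\langle f,e_\lambda\rangle_{L^2(\mu)}|^2\le B\|f\|^2_{L^2(\mu)}$ for all $f\in L^2(\mu)$. "$L^2(\mu)$ admits a Fourier frame" means such a $\Lambda$ exists. $\delta_0$ denotes the Dirac measure at the origin. *)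

theory Defs
  imports "HOL-Analysis.Analysis"
begin

definition expo :: "'a::euclidean_space \<Rightarrow> 'a \<Rightarrow> complex" where
  "expo l x = cis (2 * pi * (l \<bullet> x))"

definition L2 :: "'a::euclidean_space measure \<Rightarrow> ('a \<Rightarrow> complex) set" where
  "L2 M = {f. f \<in> borel_measurable M \<and> integrable M (\<lambda>x. (cmod (f x))\<^sup>2)}"

definition L2_norm_sq :: "'a::euclidean_space measure \<Rightarrow> ('a \<Rightarrow> complex) \<Rightarrow> real" where
  "L2_norm_sq M f = (\<integral>x. (cmod (f x))\<^sup>2 \<partial>M)"

definition L2_inner :: "'a::euclidean_space measure \<Rightarrow> ('a \<Rightarrow> complex) \<Rightarrow> ('a \<Rightarrow> complex) \<Rightarrow> complex" where
  "L2_inner M f g = (\<integral>x. f x * cnj (g x) \<partial>M)"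

definition fourier_frame :: "'a::euclidean_space measure \<Rightarrow> 'a set \<Rightarrow> bool" where
  "fourier_frame M \<Lambda> \<longleftrightarrow> countable \<Lambda> \<and>
     (\<exists>A B. 0 < A \<and> 0 < B \<and>
        (\<forall>f \<in> L2 M.
           (\<lambda>l. (cmod (L2_inner M f (expo l)))\<^sup>2) summable_on \<Lambda> \<and>
           A * L2_norm_sq M f \<le> (\<Sum>\<^sub>\<infinity>l\<in>\<Lambda>. (cmod (L2_inner M f (expo l)))\<^sup>2) \<and>
           (\<Sum>\<^sub>\<infinity>l\<in>\<Lambda>. (cmod (L2_inner M f (expo l)))\<^sup>2) \<le> B * L2_norm_sq M f))"

definition admits_fourier_frame :: "'a::euclidean_space measure \<Rightarrow> bool" where
  "admits_fourier_frame M \<longleftrightarrow> (\<exists>\<Lambda>. fourier_frame M \<Lambda>)"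

definition cont_finite_borel :: "'a::euclidean_space measure \<Rightarrow> bool" where
  "cont_finite_borel M \<longleftrightarrow> sets M = sets borel \<and> finite_measure M \<and>
     (\<forall>x. emeasure M {x} = 0)"

definition rho_measure :: "'a::euclidean_space measure \<Rightarrow> 'b::euclidean_space measure \<Rightarrow> ('a \<times> 'b) measure" where
  "rho_measure \<mu> \<nu> = measure_of UNIV (sets borel)
     (\<lambda>S. emeasure (distr \<mu> borel (\<lambda>x. (x, 0))) S + emeasure (distr \<nu> borel (\<lambda>y. (0, y))) S)"

end

theory Submission
  imports Defs
begin

text \<open>
  For \<open>f \<in> L\<^sup>2(\<rho>)\<close> write \<open>g = f(\<cdot>,0)\<close> and \<open>h = f(0,\<cdot>)\<close>; then
  \<open>\<parallel>f\<parallel>\<^sup>2 = \<parallel>g\<parallel>\<^sup>2 + \<parallel>h\<parallel>\<^sup>2\<close> and the coefficient of \<open>f\<close> at \<open>(\<lambda>, \<gamma>)\<close> is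
  \<open>a\<^sub>\<lambda> + b\<^sub>\<gamma>\<close>, with \<open>a\<close>, \<open>b\<close> the coefficients of \<open>g\<close>, \<open>h\<close>.
  Take frames \<open>\<Lambda>\<close> for \<open>\<mu>\<close> and \<open>\<Gamma>\<close> for \<open>\<nu>\<close>, and infinite Bessel sets \<open>S\<close> for \<open>\<mu>\<close>
  and \<open>T\<close> for \<open>\<nu>\<close>: these exist because an atomless measure with a finite frame is zero
  (the lower frame bound forces every set to have measure \<open>0\<close> or at least a fixed
  \<open>\<delta> > 0\<close>). Pair every \<open>\<lambda> \<in> \<Lambda>\<close> with \<open>N\<close> distinct points of \<open>T\<close>, and every
  \<open>\<gamma> \<in> \<Gamma>\<close> with \<open>N\<close> distinct points of \<open>S\<close>. Since \<open>|a + b|\<^sup>2 \<ge> |a|\<^sup>2/2 - |b|\<^sup>2\<close>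
  and \<open>\<Sum>\<^sub>T |b|\<^sup>2 \<le> C \<parallel>h\<parallel>\<^sup>2\<close>, the \<open>N\<close> copies of \<open>|a\<^sub>\<lambda>|\<^sup>2\<close> dominate the perturbation once
  \<open>N\<close> is large, which gives the lower frame bound; the upper bound follows from
  \<open>|a + b|\<^sup>2 \<le> 2|a|\<^sup>2 + 2|b|\<^sup>2\<close>.
\<close>


lemma nn_integral_sum_measure:
  assumes sets1: "sets M1 = sets M" and sets2: "sets M2 = sets M"
    and emeasure_sum: "\<And>A. A \<in> sets M \<Longrightarrow> emeasure M A = emeasure M1 A + emeasure M2 A"
    and f: "f \<in> borel_measurable M"
  shows "(\<integral>\<^sup>+x. f x \<partial>M) = (\<integral>\<^sup>+x. f x \<partial>M1) + (\<integral>\<^sup>+x. f x \<partial>M2)"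
  using f
proof (induction rule: borel_measurable_induct)
  have space1: "space M1 = space M" and space2: "space M2 = space M"
    using sets1 sets2 by (metis sets_eq_imp_space_eq)+
  have meas1: "g \<in> borel_measurable M \<Longrightarrow> g \<in> borel_measurable M1" for g :: "_ \<Rightarrow> ennreal"
    using measurable_cong_sets[OF sets1 refl] by auto
  have meas2: "g \<in> borel_measurable M \<Longrightarrow> g \<in> borel_measurable M2" for g :: "_ \<Rightarrow> ennreal"
    using measurable_cong_sets[OF sets2 refl] by auto
  {
    case (cong f g)
    have "(\<integral>\<^sup>+x. f x \<partial>N) = (\<integral>\<^sup>+x. g x \<partial>N)" if "space N = space M" for N
      by (intro nn_integral_cong) (use cong that in auto)
    with space1 space2 cong show ?case by metis
  next
    case (set A)
    then show ?case using sets1 sets2 emeasure_sum by simp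
  next
    case (mult u c)
    then show ?case by (simp add: nn_integral_cmult meas1 meas2 distrib_left)
  next
    case (add u v)
    then show ?case by (simp add: nn_integral_add meas1 meas2 ac_simps)
  next
    case (seq U)
    have SUP_integral: "(\<integral>\<^sup>+x. (SUP i. U i) x \<partial>N) = (SUP i. \<integral>\<^sup>+x. U i x \<partial>N)"
      if "\<And>i. U i \<in> borel_measurable N" for N
      unfolding SUP_apply by (rule nn_integral_monotone_convergence_SUP[OF \<open>incseq U\<close> that])
    have inc: "incseq (\<lambda>i. \<integral>\<^sup>+x. U i x \<partial>N)" for N
      using \<open>incseq U\<close> by (auto simp: incseq_def le_fun_def intro!: nn_integral_mono)
    have "(\<integral>\<^sup>+x. (SUP i. U i) x \<partial>M) = (SUP i. \<integral>\<^sup>+x. U i x \<partial>M)"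
      by (rule SUP_integral) (rule seq)
    also have "\<dots> = (SUP i. (\<integral>\<^sup>+x. U i x \<partial>M1) + (\<integral>\<^sup>+x. U i x \<partial>M2))"
      using seq by simp
    also have "\<dots> = (SUP i. \<integral>\<^sup>+x. U i x \<partial>M1) + (SUP i. \<integral>\<^sup>+x. U i x \<partial>M2)"
      by (rule ennreal_SUP_add[OF inc inc])
    also have "\<dots> = (\<integral>\<^sup>+x. (SUP i. U i) x \<partial>M1) + (\<integral>\<^sup>+x. (SUP i. U i) x \<partial>M2)"
      using SUP_integral[of M1] SUP_integral[of M2] seq(1) meas1 meas2 by presburger
    finally show ?case .
  }
qed

lemma integrable_sum_measure_iff:
  fixes f :: "_ \<Rightarrow> 'b::{banach,second_countable_topology}"
  assumes sets1: "sets M1 = sets M" and sets2: "sets M2 = sets M"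
    and emeasure_sum: "\<And>A. A \<in> sets M \<Longrightarrow> emeasure M A = emeasure M1 A + emeasure M2 A"
  shows "integrable M f \<longleftrightarrow> integrable M1 f \<and> integrable M2 f"
proof -
  have "borel_measurable M1 = borel_measurable M" "borel_measurable M2 = borel_measurable M"
    using measurable_cong_sets[OF sets1 refl] measurable_cong_sets[OF sets2 refl] .
  moreover have "(\<integral>\<^sup>+x. norm (f x) \<partial>M) = (\<integral>\<^sup>+x. norm (f x) \<partial>M1) + (\<integral>\<^sup>+x. norm (f x) \<partial>M2)"
    if "f \<in> borel_measurable M"
  proof -
    from that have "(\<lambda>x. ennreal (norm (f x))) \<in> borel_measurable M" by measurable
    then show ?thesis using nn_integral_sum_measure[OF sets1 sets2 emeasure_sum] by blast
  qed
  ultimately show ?thesis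
    unfolding integrable_iff_bounded by auto
qed

lemma integral_sum_measure:
  fixes f :: "_ \<Rightarrow> 'b::{banach,second_countable_topology}"
  assumes sets1: "sets M1 = sets M" and sets2: "sets M2 = sets M"
    and emeasure_sum: "\<And>A. A \<in> sets M \<Longrightarrow> emeasure M A = emeasure M1 A + emeasure M2 A"
    and f: "integrable M f"
  shows "integral\<^sup>L M f = integral\<^sup>L M1 f + integral\<^sup>L M2 f"
  using f
proof induct
  have space1: "space M1 = space M" and space2: "space M2 = space M"
    using sets1 sets2 by (metis sets_eq_imp_space_eq)+
  note integrable_iff = integrable_sum_measure_iff[OF sets1 sets2 emeasure_sum]
  {
    case (base A c)
    have "emeasure M1 A < \<infinity>" "emeasure M2 A < \<infinity>"
      using base emeasure_sum[of A] by auto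
    moreover from this have "measure M A = measure M1 A + measure M2 A"
      unfolding measure_def using emeasure_sum[OF base(1)] by (simp add: enn2real_plus)
    ultimately show ?case using base sets1 sets2 by (simp add: scaleR_add_left)
  next
    case (add f g)
    then have "integrable N f" "integrable N g" if "N \<in> {M1, M2}" for N
      using that integrable_iff by auto
    with add show ?case by (simp add: integral_add)
  next
    case (lim f s)
    have lim_integral: "(\<lambda>i. integral\<^sup>L N (s i)) \<longlonglongrightarrow> integral\<^sup>L N f"
      if "space N = space M" "integrable N f" "\<And>i. integrable N (s i)" for N
    proof (rule integral_dominated_convergence)
      show "integrable N (\<lambda>x. 2 * norm (f x))" using that by auto
      show "AE x in N. (\<lambda>i. s i x) \<longlonglongrightarrow> f x" using lim(3) that by auto
      show "\<And>i. AE x in N. norm (s i x) \<le> 2 * norm (f x)" using lim(4) that by auto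
    qed (use that borel_measurable_integrable in auto)
    have "integrable M1 f" "integrable M2 f" "\<And>i. integrable M1 (s i)" "\<And>i. integrable M2 (s i)"
      using lim(1,5) integrable_iff by blast+
    then have "(\<lambda>i. integral\<^sup>L M (s i)) \<longlonglongrightarrow> integral\<^sup>L M1 f + integral\<^sup>L M2 f"
      using tendsto_add[OF lim_integral[OF space1] lim_integral[OF space2]] lim(2) by simp
    with lim_integral[OF refl lim(5) lim(1)] show ?case by (rule LIMSEQ_unique)
  }
qed

lemma
  fixes \<mu> :: "'a::euclidean_space measure" and \<nu> :: "'b::euclidean_space measure"
  shows sets_rho_measure[simp]: "sets (rho_measure \<mu> \<nu>) = sets borel"
    and emeasure_rho_measure: "A \<in> sets borel \<Longrightarrow> emeasure (rho_measure \<mu> \<nu>) A =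
      emeasure (distr \<mu> borel (\<lambda>x. (x, 0))) A + emeasure (distr \<nu> borel (\<lambda>y. (0, y))) A"
proof -
  let ?D1 = "distr \<mu> borel (\<lambda>x. (x, 0::'b))" and ?D2 = "distr \<nu> borel (\<lambda>y. (0::'a, y))"
  have sa: "sigma_algebra UNIV (sets (borel::('a\<times>'b) measure))"
    using sets.sigma_algebra_axioms[of "borel::('a\<times>'b) measure"] by simp
  show "sets (rho_measure \<mu> \<nu>) = sets borel"
    unfolding rho_measure_def by (simp add: sigma_algebra.sigma_sets_eq[OF sa])
  have pos: "positive (sets borel) (\<lambda>S. emeasure ?D1 S + emeasure ?D2 S)"
    by (simp add: positive_def)
  have "countably_additive (sets borel) (\<lambda>S. emeasure ?D1 S + emeasure ?D2 S)"
    unfolding countably_additive_def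
    by (auto simp: suminf_add[symmetric] suminf_emeasure)
  then show "A \<in> sets borel \<Longrightarrow> emeasure (rho_measure \<mu> \<nu>) A = emeasure ?D1 A + emeasure ?D2 A"
    unfolding rho_measure_def by (rule emeasure_measure_of_sigma[OF sa pos])
qed

lemma measurable_Pair_zero_left:
  assumes "sets M = sets borel"
  shows "(\<lambda>x. (x, 0)) \<in> M \<rightarrow>\<^sub>M borel"
  unfolding measurable_cong_sets[OF assms refl] by (intro borel_measurable_continuous_onI continuous_intros)

lemma measurable_Pair_zero_right:
  assumes "sets M = sets borel"
  shows "(\<lambda>y. (0, y)) \<in> M \<rightarrow>\<^sub>M borel"
  unfolding measurable_cong_sets[OF assms refl] by (intro borel_measurable_continuous_onI continuous_intros)

lemma
  fixes \<mu> :: "'a::euclidean_space measure" and \<nu> :: "'b::euclidean_space measure"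
    and g :: "'a \<times> 'b \<Rightarrow> 'c::{banach,second_countable_topology}"
  assumes sets_\<mu>: "sets \<mu> = sets borel" and sets_\<nu>: "sets \<nu> = sets borel"
    and g: "g \<in> borel_measurable borel"
  shows integrable_rho_measure_iff: "integrable (rho_measure \<mu> \<nu>) g \<longleftrightarrow>
      integrable \<mu> (\<lambda>x. g (x, 0)) \<and> integrable \<nu> (\<lambda>y. g (0, y))"
    and integral_rho_measure: "integrable (rho_measure \<mu> \<nu>) g \<Longrightarrow>
      integral\<^sup>L (rho_measure \<mu> \<nu>) g = (\<integral>x. g (x, 0) \<partial>\<mu>) + (\<integral>y. g (0, y) \<partial>\<nu>)"
proof -
  let ?D1 = "distr \<mu> borel (\<lambda>x. (x, 0::'b))" and ?D2 = "distr \<nu> borel (\<lambda>y. (0::'a, y))"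
  have emeasure_sum: "emeasure (rho_measure \<mu> \<nu>) A = emeasure ?D1 A + emeasure ?D2 A"
    if "A \<in> sets (rho_measure \<mu> \<nu>)" for A
    using that by (simp add: emeasure_rho_measure)
  note embed1 = measurable_Pair_zero_left[OF sets_\<mu>]
    and embed2 = measurable_Pair_zero_right[OF sets_\<nu>]
  show "integrable (rho_measure \<mu> \<nu>) g \<longleftrightarrow>
      integrable \<mu> (\<lambda>x. g (x, 0)) \<and> integrable \<nu> (\<lambda>y. g (0, y))"
    using integrable_sum_measure_iff[of ?D1 "rho_measure \<mu> \<nu>" ?D2 g, OF _ _ emeasure_sum]
      integrable_distr_eq[OF embed1 g] integrable_distr_eq[OF embed2 g] by simp
  show "integral\<^sup>L (rho_measure \<mu> \<nu>) g = (\<integral>x. g (x, 0) \<partial>\<mu>) + (\<integral>y. g (0, y) \<partial>\<nu>)"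
    if "integrable (rho_measure \<mu> \<nu>) g"
    using integral_sum_measure[of ?D1 "rho_measure \<mu> \<nu>" ?D2, OF _ _ emeasure_sum that]
      integral_distr[OF embed1 g] integral_distr[OF embed2 g] by simp
qed

lemma finite_measure_rho_measure:
  fixes \<mu> :: "'a::euclidean_space measure" and \<nu> :: "'b::euclidean_space measure"
  assumes "sets \<mu> = sets borel" "sets \<nu> = sets borel" "finite_measure \<mu>" "finite_measure \<nu>"
  shows "finite_measure (rho_measure \<mu> \<nu>)"
proof
  have "emeasure (rho_measure \<mu> \<nu>) UNIV = emeasure \<mu> (space \<mu>) + emeasure \<nu> (space \<nu>)"
    using assms(1,2) by (simp add: emeasure_rho_measure emeasure_distr
        measurable_Pair_zero_left measurable_Pair_zero_right)
  then show "emeasure (rho_measure \<mu> \<nu>) (space (rho_measure \<mu> \<nu>)) \<noteq> \<infinity>"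
    using assms by (simp add: sets_eq_imp_space_eq[OF sets_rho_measure] finite_measure.emeasure_finite)
qed

lemma expo_Pair_left: "expo (l1, l2) (x, 0) = expo l1 x"
  and expo_Pair_right: "expo (l1, l2) (0, y) = expo l2 y"
  by (simp_all add: expo_def)

lemma norm_expo [simp]: "cmod (expo l x) = 1"
  by (simp add: expo_def)

lemma borel_measurable_cnj_expo [measurable]: "(\<lambda>x. cnj (expo l x)) \<in> borel_measurable borel"
  unfolding expo_def by (intro borel_measurable_continuous_onI continuous_intros)

lemma integrable_mult_cnj_expo:
  assumes "finite_measure M" "sets M = sets borel" and f: "f \<in> L2 M"
  shows "integrable M (\<lambda>x. f x * cnj (expo l x))"
proof (rule Bochner_Integration.integrable_bound)
  show "integrable M (\<lambda>x. 1 + (cmod (f x))\<^sup>2)"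
    using f assms(1) unfolding L2_def by (simp add: finite_measure.integrable_const)
  have [measurable]: "(\<lambda>x. cnj (expo l x)) \<in> borel_measurable M"
    unfolding measurable_cong_sets[OF assms(2) refl] by simp
  have [measurable]: "f \<in> borel_measurable M"
    using f by (simp add: L2_def)
  show "(\<lambda>x. f x * cnj (expo l x)) \<in> borel_measurable M"
    by measurable
  have "t \<le> 1 + t\<^sup>2" if "t \<ge> 0" for t :: real
    using zero_le_power2[of "t - 1"] that by (simp add: power2_eq_square algebra_simps)
  then show "AE x in M. norm (f x * cnj (expo l x)) \<le> norm (1 + (cmod (f x))\<^sup>2)"
    by (simp add: norm_mult)
qed

lemma borel_measurable_of_L2_rho_measure:
  "f \<in> L2 (rho_measure \<mu> \<nu>) \<Longrightarrow> f \<in> borel_measurable borel"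
  using measurable_cong_sets[OF sets_rho_measure refl] by (auto simp: L2_def)

lemma
  fixes \<mu> :: "'a::euclidean_space measure" and \<nu> :: "'b::euclidean_space measure"
  assumes sets_\<mu>: "sets \<mu> = sets borel" and sets_\<nu>: "sets \<nu> = sets borel"
    and f: "f \<in> L2 (rho_measure \<mu> \<nu>)"
  shows L2_rho_measure_slices: "(\<lambda>x. f (x, 0)) \<in> L2 \<mu>" "(\<lambda>y. f (0, y)) \<in> L2 \<nu>"
    and L2_norm_sq_rho_measure: "L2_norm_sq (rho_measure \<mu> \<nu>) f =
      L2_norm_sq \<mu> (\<lambda>x. f (x, 0)) + L2_norm_sq \<nu> (\<lambda>y. f (0, y))"
proof -
  have [measurable]: "f \<in> borel_measurable borel"
    using f by (rule borel_measurable_of_L2_rho_measure)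
  have sq: "(\<lambda>p. (cmod (f p))\<^sup>2) \<in> borel_measurable borel"
    by measurable
  have "integrable (rho_measure \<mu> \<nu>) (\<lambda>p. (cmod (f p))\<^sup>2)"
    using f by (simp add: L2_def)
  then have "integrable \<mu> (\<lambda>x. (cmod (f (x, 0)))\<^sup>2)" "integrable \<nu> (\<lambda>y. (cmod (f (0, y)))\<^sup>2)"
    and "L2_norm_sq (rho_measure \<mu> \<nu>) f =
      L2_norm_sq \<mu> (\<lambda>x. f (x, 0)) + L2_norm_sq \<nu> (\<lambda>y. f (0, y))"
    using integrable_rho_measure_iff[OF sets_\<mu> sets_\<nu> sq] integral_rho_measure[OF sets_\<mu> sets_\<nu> sq]
    by (simp_all add: L2_norm_sq_def)
  moreover have "(\<lambda>x. f (x, 0)) \<in> borel_measurable \<mu>" "(\<lambda>y. f (0, y)) \<in> borel_measurable \<nu>"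
    using measurable_Pair_zero_left[OF sets_\<mu>] measurable_Pair_zero_right[OF sets_\<nu>] by measurable
  ultimately show "(\<lambda>x. f (x, 0)) \<in> L2 \<mu>" "(\<lambda>y. f (0, y)) \<in> L2 \<nu>"
    and "L2_norm_sq (rho_measure \<mu> \<nu>) f =
      L2_norm_sq \<mu> (\<lambda>x. f (x, 0)) + L2_norm_sq \<nu> (\<lambda>y. f (0, y))"
    by (simp_all add: L2_def)
qed

lemma L2_inner_rho_measure_expo:
  fixes \<mu> :: "'a::euclidean_space measure" and \<nu> :: "'b::euclidean_space measure"
  assumes sets_\<mu>: "sets \<mu> = sets borel" and sets_\<nu>: "sets \<nu> = sets borel"
    and "finite_measure \<mu>" "finite_measure \<nu>" and f: "f \<in> L2 (rho_measure \<mu> \<nu>)"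
  shows "L2_inner (rho_measure \<mu> \<nu>) f (expo (l1, l2)) =
    L2_inner \<mu> (\<lambda>x. f (x, 0)) (expo l1) + L2_inner \<nu> (\<lambda>y. f (0, y)) (expo l2)"
proof -
  have [measurable]: "f \<in> borel_measurable borel"
    using f by (rule borel_measurable_of_L2_rho_measure)
  have g: "(\<lambda>p. f p * cnj (expo (l1, l2) p)) \<in> borel_measurable borel"
    by measurable
  have "integrable (rho_measure \<mu> \<nu>) (\<lambda>p. f p * cnj (expo (l1, l2) p))"
    using assms by (intro integrable_mult_cnj_expo finite_measure_rho_measure) simp_all
  then show ?thesis
    unfolding L2_inner_def using integral_rho_measure[OF sets_\<mu> sets_\<nu> g]
    by (simp add: expo_Pair_left expo_Pair_right)
qed

definition fourier_frame_bounds :: "'a::euclidean_space measure \<Rightarrow> 'a set \<Rightarrow> real \<Rightarrow> real \<Rightarrow> bool"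
  where "fourier_frame_bounds M \<Lambda> A B \<longleftrightarrow>
    (\<forall>f \<in> L2 M.
       (\<lambda>l. (cmod (L2_inner M f (expo l)))\<^sup>2) summable_on \<Lambda> \<and>
       A * L2_norm_sq M f \<le> (\<Sum>\<^sub>\<infinity>l\<in>\<Lambda>. (cmod (L2_inner M f (expo l)))\<^sup>2) \<and>
       (\<Sum>\<^sub>\<infinity>l\<in>\<Lambda>. (cmod (L2_inner M f (expo l)))\<^sup>2) \<le> B * L2_norm_sq M f)"

lemma fourier_frame_iff_bounds:
  "fourier_frame M \<Lambda> \<longleftrightarrow> countable \<Lambda> \<and> (\<exists>A B. 0 < A \<and> 0 < B \<and> fourier_frame_bounds M \<Lambda> A B)"
  unfolding fourier_frame_def fourier_frame_bounds_def by blast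

lemma fourier_frame_bounds_zero_lower:
  "fourier_frame_bounds M \<Lambda> A B \<Longrightarrow> fourier_frame_bounds M \<Lambda> 0 B"
  by (simp add: fourier_frame_bounds_def infsum_nonneg)

lemma measure_eq_0_or_ge_if_finite_frame:
  assumes "finite_measure M" and frame: "fourier_frame_bounds M \<Lambda> A B" and "finite \<Lambda>"
    and E: "E \<in> sets M"
  shows "measure M E = 0 \<or> A \<le> card \<Lambda> * measure M E"
proof -
  interpret finite_measure M by fact
  let ?f = "\<lambda>x. indicator E x :: complex"
  let ?m = "measure M E"
  have sq: "(\<lambda>x. (cmod (?f x))\<^sup>2) = indicator E"
    by (auto simp: fun_eq_iff indicator_def)
  have "?f \<in> L2 M"
    unfolding L2_def using E sq by (simp add: emeasure_eq_measure)
  moreover have "L2_norm_sq M ?f = ?m"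
    unfolding L2_norm_sq_def using E sq by simp
  moreover have coeff: "cmod (L2_inner M ?f (expo l)) \<le> ?m" for l
  proof -
    have "cmod (L2_inner M ?f (expo l)) \<le> (\<integral>x. norm (?f x * cnj (expo l x)) \<partial>M)"
      unfolding L2_inner_def by (rule integral_norm_bound)
    also have "(\<lambda>x. norm (?f x * cnj (expo l x))) = indicator E"
      by (auto simp: fun_eq_iff indicator_def norm_mult)
    finally show ?thesis using E by simp
  qed
  ultimately have "A * ?m \<le> (\<Sum>l\<in>\<Lambda>. (cmod (L2_inner M ?f (expo l)))\<^sup>2)"
    using frame \<open>finite \<Lambda>\<close> by (auto simp: fourier_frame_bounds_def)
  also have "\<dots> \<le> (\<Sum>l\<in>\<Lambda>. ?m\<^sup>2)"
    by (intro sum_mono power_mono coeff) simp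
  finally have "A * ?m \<le> (card \<Lambda> * ?m) * ?m"
    by (simp add: power2_eq_square mult.assoc)
  then show ?thesis
    using measure_nonneg[of M E] by (cases "?m = 0") (auto simp: mult_le_cancel_right)
qed

lemma measure_ball_small_if_atom_free:
  fixes M :: "'a::metric_space measure"
  assumes "finite_measure M" "sets M = sets borel" "emeasure M {x} = 0" "0 < \<delta>"
  shows "\<exists>r>0. measure M (ball x r) < \<delta>"
proof -
  interpret finite_measure M by fact
  have "(\<lambda>n. measure M (ball x (1 / Suc n))) \<longlonglongrightarrow> measure M (\<Inter>n. ball x (1 / Suc n))"
    by (rule finite_Lim_measure_decseq)
       (auto simp: decseq_def assms(2) intro!: subset_ball divide_left_mono)
  moreover have "(\<Inter>n. ball x (1 / Suc n)) = {x}"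
  proof (intro equalityI subsetI)
    fix y assume y: "y \<in> (\<Inter>n. ball x (1 / Suc n))"
    show "y \<in> {x}"
    proof (rule ccontr)
      assume "y \<notin> {x}"
      then obtain n where "inverse (real (Suc n)) < dist x y"
        using reals_Archimedean by (metis dist_pos_lt singleton_iff)
      moreover have "dist x y < 1 / Suc n" using y by simp
      ultimately show False by (simp add: inverse_eq_divide)
    qed
  qed auto
  ultimately have "(\<lambda>n. measure M (ball x (1 / Suc n))) \<longlonglongrightarrow> 0"
    using assms(3) by (simp add: measure_def)
  then have "eventually (\<lambda>n. measure M (ball x (1 / Suc n)) < \<delta>) sequentially"
    using \<open>0 < \<delta>\<close> by (rule order_tendstoD(2))
  then obtain n where "measure M (ball x (1 / Suc n)) < \<delta>"
    by (auto simp: eventually_sequentially)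
  then show ?thesis by (intro exI[of _ "1 / Suc n"]) auto
qed

lemma emeasure_space_eq_0_if_locally_null:
  fixes M :: "'a::{metric_space, second_countable_topology} measure"
  assumes "sets M = sets borel" and null: "\<And>x. \<exists>r>0. ball x r \<in> null_sets M"
  shows "emeasure M (space M) = 0"
proof -
  obtain r where r: "\<And>x. r x > 0" "\<And>x. ball x (r x) \<in> null_sets M"
    using null by metis
  obtain \<F> where \<F>: "\<F> \<subseteq> range (\<lambda>x. ball x (r x))" "countable \<F>"
    "\<Union>\<F> = \<Union>(range (\<lambda>x. ball x (r x)))"
    using Lindelof[of "range (\<lambda>x. ball x (r x))"] by auto
  have "\<Union>(range (\<lambda>x. ball x (r x))) = UNIV"
    using r(1) by auto
  moreover have "(\<Union>B\<in>\<F>. B) \<in> null_sets M"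
    using \<F> r(2) by (intro null_sets_UN') auto
  ultimately show ?thesis
    using \<F>(3) sets_eq_imp_space_eq[OF assms(1)] by auto
qed

lemma emeasure_space_eq_0_if_finite_frame:
  fixes M :: "'a::euclidean_space measure"
  assumes M: "cont_finite_borel M" and frame: "fourier_frame M \<Lambda>" and "finite \<Lambda>"
  shows "emeasure M (space M) = 0"
proof -
  have sets_M: "sets M = sets borel" and "finite_measure M" and atom_free: "\<And>x. emeasure M {x} = 0"
    using M by (auto simp: cont_finite_borel_def)
  obtain A B where "0 < A" and bounds: "fourier_frame_bounds M \<Lambda> A B"
    using frame by (auto simp: fourier_frame_iff_bounds)
  define \<delta> where "\<delta> = A / (card \<Lambda> + 1)"
  have "0 < \<delta>" and card_\<delta>: "card \<Lambda> * \<delta> < A"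
    using \<open>0 < A\<close> by (simp_all add: \<delta>_def field_simps)
  have "ball x r \<in> null_sets M" if "0 < r" "measure M (ball x r) < \<delta>" for x r
  proof -
    have "card \<Lambda> * measure M (ball x r) \<le> card \<Lambda> * \<delta>"
      using that by (intro mult_left_mono) auto
    then have "measure M (ball x r) = 0"
      using measure_eq_0_or_ge_if_finite_frame[OF \<open>finite_measure M\<close> bounds \<open>finite \<Lambda>\<close>, of "ball x r"]
        card_\<delta> sets_M by auto
    then show ?thesis
      using sets_M \<open>finite_measure M\<close> by (simp add: finite_measure.emeasure_eq_measure null_sets_def)
  qed
  then show ?thesis
    using measure_ball_small_if_atom_free[OF \<open>finite_measure M\<close> sets_M atom_free \<open>0 < \<delta>\<close>]
    by (intro emeasure_space_eq_0_if_locally_null[OF sets_M]) blast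
qed

lemma cmod_add_sq_le: "(cmod (x + y))\<^sup>2 \<le> 2 * (cmod x)\<^sup>2 + 2 * (cmod y)\<^sup>2"
proof -
  have "(cmod (x + y))\<^sup>2 \<le> (cmod x + cmod y)\<^sup>2"
    by (intro power_mono norm_triangle_ineq) simp
  also have "\<dots> \<le> 2 * (cmod x)\<^sup>2 + 2 * (cmod y)\<^sup>2"
    using zero_le_power2[of "cmod x - cmod y"] by (simp add: power2_eq_square algebra_simps)
  finally show ?thesis .
qed

lemma cmod_add_sq_ge: "(cmod x)\<^sup>2 / 2 - (cmod y)\<^sup>2 \<le> (cmod (x + y))\<^sup>2"
  using cmod_add_sq_le[of "x + y" "-y"] by simp

lemma sum_Times_lessThan_fst: "(\<Sum>p\<in>G \<times> {..<N}. f (fst p)) = real N * sum f G"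
proof -
  have "(\<Sum>p\<in>G \<times> {..<N}. f (fst p)) = (\<Sum>x\<in>G. \<Sum>_<N. f x)"
    by (simp only: sum.cartesian_product') simp
  then show ?thesis by (simp add: sum_distrib_left)
qed

lemma sum_le_on_graph:
  fixes a :: "'a \<Rightarrow> complex" and b :: "'b \<Rightarrow> complex" and \<tau> :: "'a \<times> nat \<Rightarrow> 'b"
  assumes \<tau>: "inj_on \<tau> (\<Lambda> \<times> {..<N})" "\<tau> ` (\<Lambda> \<times> {..<N}) \<subseteq> T"
    and h: "inj_on h (\<Lambda> \<times> {..<N})" "\<And>p. p \<in> \<Lambda> \<times> {..<N} \<Longrightarrow> \<Phi> (h p) = (cmod (a (fst p) + b (\<tau> p)))\<^sup>2"
    and a: "(\<lambda>l. (cmod (a l))\<^sup>2) summable_on \<Lambda>" and b: "(\<lambda>t. (cmod (b t))\<^sup>2) summable_on T"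
    and F: "finite F" "F \<subseteq> h ` (\<Lambda> \<times> {..<N})"
  shows "sum \<Phi> F \<le> 2 * real N * (\<Sum>\<^sub>\<infinity>l\<in>\<Lambda>. (cmod (a l))\<^sup>2) + 2 * (\<Sum>\<^sub>\<infinity>t\<in>T. (cmod (b t))\<^sup>2)"
proof -
  define G where "G = h -` F \<inter> (\<Lambda> \<times> {..<N})"
  have G: "finite G" "G \<subseteq> \<Lambda> \<times> {..<N}" "F = h ` G"
    using F h(1) by (auto simp: G_def intro: finite_vimage_IntI)
  have "sum \<Phi> F = (\<Sum>p\<in>G. \<Phi> (h p))"
    using G inj_on_subset[OF h(1)] by (simp add: sum.reindex)
  also have "\<dots> = (\<Sum>p\<in>G. (cmod (a (fst p) + b (\<tau> p)))\<^sup>2)"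
    using G h(2) by (intro sum.cong) auto
  also have "\<dots> \<le> 2 * (\<Sum>p\<in>G. (cmod (a (fst p)))\<^sup>2) + 2 * (\<Sum>p\<in>G. (cmod (b (\<tau> p)))\<^sup>2)"
    using sum_mono[OF cmod_add_sq_le] by (simp add: sum.distrib sum_distrib_left)
  also have "(\<Sum>p\<in>G. (cmod (a (fst p)))\<^sup>2) \<le> real N * (\<Sum>\<^sub>\<infinity>l\<in>\<Lambda>. (cmod (a l))\<^sup>2)"
  proof -
    have "(\<Sum>p\<in>G. (cmod (a (fst p)))\<^sup>2) \<le> (\<Sum>p\<in>fst ` G \<times> {..<N}. (cmod (a (fst p)))\<^sup>2)"
      using G by (intro sum_mono2) force+
    also have "\<dots> = real N * (\<Sum>l\<in>fst ` G. (cmod (a l))\<^sup>2)"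
      by (rule sum_Times_lessThan_fst)
    also have "(\<Sum>l\<in>fst ` G. (cmod (a l))\<^sup>2) \<le> (\<Sum>\<^sub>\<infinity>l\<in>\<Lambda>. (cmod (a l))\<^sup>2)"
      using G by (intro finite_sum_le_infsum a) auto
    finally show ?thesis by (simp add: mult_left_mono)
  qed
  also have "(\<Sum>p\<in>G. (cmod (b (\<tau> p)))\<^sup>2) \<le> (\<Sum>\<^sub>\<infinity>t\<in>T. (cmod (b t))\<^sup>2)"
  proof -
    have "(\<Sum>p\<in>G. (cmod (b (\<tau> p)))\<^sup>2) = (\<Sum>t\<in>\<tau> ` G. (cmod (b t))\<^sup>2)"
      using inj_on_subset[OF \<tau>(1) G(2)] by (simp add: sum.reindex)
    also have "\<dots> \<le> (\<Sum>\<^sub>\<infinity>t\<in>T. (cmod (b t))\<^sup>2)"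
      using G \<tau>(2) by (intro finite_sum_le_infsum b) auto
    finally show ?thesis .
  qed
  finally show ?thesis by (simp add: mult.assoc)
qed

lemma infsum_ge_on_graph:
  fixes a :: "'a \<Rightarrow> complex" and b :: "'b \<Rightarrow> complex" and \<tau> :: "'a \<times> nat \<Rightarrow> 'b"
    and \<Phi> :: "'c \<Rightarrow> real"
  assumes \<tau>: "inj_on \<tau> (\<Lambda> \<times> {..<N})" "\<tau> ` (\<Lambda> \<times> {..<N}) \<subseteq> T"
    and h: "inj_on h (\<Lambda> \<times> {..<N})" "h ` (\<Lambda> \<times> {..<N}) \<subseteq> \<Theta>"
      "\<And>p. p \<in> \<Lambda> \<times> {..<N} \<Longrightarrow> \<Phi> (h p) = (cmod (a (fst p) + b (\<tau> p)))\<^sup>2"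
    and \<Phi>: "\<Phi> summable_on \<Theta>" "\<And>l. 0 \<le> \<Phi> l"
    and a: "(\<lambda>l. (cmod (a l))\<^sup>2) summable_on \<Lambda>" and b: "(\<lambda>t. (cmod (b t))\<^sup>2) summable_on T"
  shows "real N / 2 * (\<Sum>\<^sub>\<infinity>l\<in>\<Lambda>. (cmod (a l))\<^sup>2) \<le> (\<Sum>\<^sub>\<infinity>l\<in>\<Theta>. \<Phi> l) + (\<Sum>\<^sub>\<infinity>t\<in>T. (cmod (b t))\<^sup>2)"
proof -
  have "(\<Sum>\<^sub>\<infinity>l\<in>\<Lambda>. real N / 2 * (cmod (a l))\<^sup>2) \<le> (\<Sum>\<^sub>\<infinity>l\<in>\<Theta>. \<Phi> l) + (\<Sum>\<^sub>\<infinity>t\<in>T. (cmod (b t))\<^sup>2)"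
  proof (rule infsum_le_finite_sums[OF summable_on_cmult_right[OF a]])
    fix G assume G: "finite G" "G \<subseteq> \<Lambda>"
    let ?G = "G \<times> {..<N}"
    have sub: "?G \<subseteq> \<Lambda> \<times> {..<N}" using G by auto
    have "(\<Sum>l\<in>G. real N / 2 * (cmod (a l))\<^sup>2) = (\<Sum>p\<in>?G. (cmod (a (fst p)))\<^sup>2 / 2)"
      using sum_Times_lessThan_fst[of "\<lambda>l. (cmod (a l))\<^sup>2 / 2" G N]
      by (simp add: sum_distrib_left)
    also have "\<dots> \<le> (\<Sum>p\<in>?G. (cmod (a (fst p) + b (\<tau> p)))\<^sup>2 + (cmod (b (\<tau> p)))\<^sup>2)"
      using cmod_add_sq_ge by (intro sum_mono) (simp add: algebra_simps)
    also have "\<dots> = (\<Sum>p\<in>?G. \<Phi> (h p)) + (\<Sum>p\<in>?G. (cmod (b (\<tau> p)))\<^sup>2)"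
      using sub h(3) by (auto simp: sum.distrib intro!: sum.cong)
    also have "\<dots> = sum \<Phi> (h ` ?G) + (\<Sum>t\<in>\<tau> ` ?G. (cmod (b t))\<^sup>2)"
      using inj_on_subset[OF h(1) sub] inj_on_subset[OF \<tau>(1) sub] by (simp add: sum.reindex)
    also have "\<dots> \<le> (\<Sum>\<^sub>\<infinity>l\<in>\<Theta>. \<Phi> l) + (\<Sum>\<^sub>\<infinity>t\<in>T. (cmod (b t))\<^sup>2)"
      using G h(2) \<tau>(2) \<Phi>(2)
      by (intro add_mono finite_sum_le_infsum \<Phi>(1) b) (auto simp: image_subset_iff)
    finally show "(\<Sum>l\<in>G. real N / 2 * (cmod (a l))\<^sup>2) \<le> (\<Sum>\<^sub>\<infinity>l\<in>\<Theta>. \<Phi> l) + (\<Sum>\<^sub>\<infinity>t\<in>T. (cmod (b t))\<^sup>2)" .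
  qed
  then show ?thesis
    using infsum_cmult_right[OF a, of "real N / 2"] by simp
qed

lemma infsum_on_two_graphs_le:
  fixes a :: "'a \<Rightarrow> complex" and b :: "'b \<Rightarrow> complex"
    and \<tau> :: "'a \<times> nat \<Rightarrow> 'b" and \<sigma> :: "'b \<times> nat \<Rightarrow> 'a"
    and \<Lambda> :: "'a set" and \<Gamma> :: "'b set" and N :: nat
  defines "\<Theta> \<equiv> (\<lambda>p. (fst p, \<tau> p)) ` (\<Lambda> \<times> {..<N}) \<union> (\<lambda>q. (\<sigma> q, fst q)) ` (\<Gamma> \<times> {..<N})"
    and "\<Phi> \<equiv> \<lambda>l. (cmod (a (fst l) + b (snd l)))\<^sup>2"
  assumes \<tau>: "inj_on \<tau> (\<Lambda> \<times> {..<N})" "\<tau> ` (\<Lambda> \<times> {..<N}) \<subseteq> T"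
    and \<sigma>: "inj_on \<sigma> (\<Gamma> \<times> {..<N})" "\<sigma> ` (\<Gamma> \<times> {..<N}) \<subseteq> S"
    and a: "(\<lambda>l. (cmod (a l))\<^sup>2) summable_on \<Lambda>" "(\<lambda>l. (cmod (a l))\<^sup>2) summable_on S"
    and b: "(\<lambda>l. (cmod (b l))\<^sup>2) summable_on \<Gamma>" "(\<lambda>l. (cmod (b l))\<^sup>2) summable_on T"
  shows "\<Phi> summable_on \<Theta>"
    and "(\<Sum>\<^sub>\<infinity>l\<in>\<Theta>. \<Phi> l) \<le>
      2 * real N * ((\<Sum>\<^sub>\<infinity>l\<in>\<Lambda>. (cmod (a l))\<^sup>2) + (\<Sum>\<^sub>\<infinity>l\<in>\<Gamma>. (cmod (b l))\<^sup>2)) +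
      2 * ((\<Sum>\<^sub>\<infinity>l\<in>T. (cmod (b l))\<^sup>2) + (\<Sum>\<^sub>\<infinity>l\<in>S. (cmod (a l))\<^sup>2))"
      (is "_ \<le> ?bound")
proof -
  let ?I1 = "\<Lambda> \<times> {..<N}" and ?I2 = "\<Gamma> \<times> {..<N}"
  let ?h1 = "\<lambda>p. (fst p, \<tau> p)" and ?h2 = "\<lambda>q. (\<sigma> q, fst q)"
  have \<Phi>_nonneg: "0 \<le> \<Phi> l" for l
    by (simp add: \<Phi>_def)
  have h1: "inj_on ?h1 ?I1" "\<And>p. \<Phi> (?h1 p) = (cmod (a (fst p) + b (\<tau> p)))\<^sup>2"
    using \<tau>(1) by (auto simp: inj_on_def \<Phi>_def)
  have h2: "inj_on ?h2 ?I2" "\<And>q. \<Phi> (?h2 q) = (cmod (b (fst q) + a (\<sigma> q)))\<^sup>2"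
    using \<sigma>(1) by (auto simp: inj_on_def \<Phi>_def add.commute)
  have finite_sums: "sum \<Phi> F \<le> ?bound" if F: "finite F" "F \<subseteq> \<Theta>" for F
  proof -
    have "sum \<Phi> F = sum \<Phi> ((F \<inter> ?h1 ` ?I1) \<union> (F \<inter> ?h2 ` ?I2))"
      using F(2) unfolding \<Theta>_def by (intro arg_cong[where f = "sum \<Phi>"]) blast
    also have "\<dots> \<le> sum \<Phi> (F \<inter> ?h1 ` ?I1) + sum \<Phi> (F \<inter> ?h2 ` ?I2)"
      using F(1) sum_nonneg[of "(F \<inter> ?h1 ` ?I1) \<inter> (F \<inter> ?h2 ` ?I2)" \<Phi>] \<Phi>_nonneg
      by (simp add: sum_Un)
    also have "\<dots> \<le> (2 * real N * (\<Sum>\<^sub>\<infinity>l\<in>\<Lambda>. (cmod (a l))\<^sup>2) + 2 * (\<Sum>\<^sub>\<infinity>t\<in>T. (cmod (b t))\<^sup>2))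
        + (2 * real N * (\<Sum>\<^sub>\<infinity>l\<in>\<Gamma>. (cmod (b l))\<^sup>2) + 2 * (\<Sum>\<^sub>\<infinity>t\<in>S. (cmod (a t))\<^sup>2))"
      using F by (intro add_mono sum_le_on_graph[OF \<tau> h1(1)] sum_le_on_graph[OF \<sigma> h2(1)])
        (auto simp: h1(2) h2(2) a b)
    also have "\<dots> = ?bound"
      by (simp add: algebra_simps)
    finally show ?thesis .
  qed
  show "\<Phi> summable_on \<Theta>"
    using \<Phi>_nonneg finite_sums by (intro nonneg_bdd_above_summable_on bdd_aboveI) auto
  then show "(\<Sum>\<^sub>\<infinity>l\<in>\<Theta>. \<Phi> l) \<le> ?bound"
    using finite_sums by (rule infsum_le_finite_sums)
qed

lemma frame_bounds_on_two_graphs: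
  fixes a :: "'a \<Rightarrow> complex" and b :: "'b \<Rightarrow> complex"
    and \<tau> :: "'a \<times> nat \<Rightarrow> 'b" and \<sigma> :: "'b \<times> nat \<Rightarrow> 'a"
    and \<Lambda> :: "'a set" and \<Gamma> :: "'b set" and N :: nat
  defines "\<Theta> \<equiv> (\<lambda>p. (fst p, \<tau> p)) ` (\<Lambda> \<times> {..<N}) \<union> (\<lambda>q. (\<sigma> q, fst q)) ` (\<Gamma> \<times> {..<N})"
    and "\<Phi> \<equiv> \<lambda>l. (cmod (a (fst l) + b (snd l)))\<^sup>2"
  assumes \<tau>: "inj_on \<tau> (\<Lambda> \<times> {..<N})" "\<tau> ` (\<Lambda> \<times> {..<N}) \<subseteq> T"
    and \<sigma>: "inj_on \<sigma> (\<Gamma> \<times> {..<N})" "\<sigma> ` (\<Gamma> \<times> {..<N}) \<subseteq> S"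
    and a_\<Lambda>: "(\<lambda>l. (cmod (a l))\<^sup>2) summable_on \<Lambda>"
      "A1 * ng \<le> (\<Sum>\<^sub>\<infinity>l\<in>\<Lambda>. (cmod (a l))\<^sup>2)" "(\<Sum>\<^sub>\<infinity>l\<in>\<Lambda>. (cmod (a l))\<^sup>2) \<le> B1 * ng"
    and a_S: "(\<lambda>l. (cmod (a l))\<^sup>2) summable_on S" "(\<Sum>\<^sub>\<infinity>l\<in>S. (cmod (a l))\<^sup>2) \<le> CS * ng"
    and b_\<Gamma>: "(\<lambda>l. (cmod (b l))\<^sup>2) summable_on \<Gamma>"
      "A2 * nh \<le> (\<Sum>\<^sub>\<infinity>l\<in>\<Gamma>. (cmod (b l))\<^sup>2)" "(\<Sum>\<^sub>\<infinity>l\<in>\<Gamma>. (cmod (b l))\<^sup>2) \<le> B2 * nh"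
    and b_T: "(\<lambda>l. (cmod (b l))\<^sup>2) summable_on T" "(\<Sum>\<^sub>\<infinity>l\<in>T. (cmod (b l))\<^sup>2) \<le> CT * nh"
    and nonneg: "0 \<le> ng" "0 \<le> nh" "0 \<le> B1" "0 \<le> B2" "0 \<le> CS" "0 \<le> CT"
    and N: "2 * (CS + CT + 1) \<le> real N * min A1 A2"
  shows "\<Phi> summable_on \<Theta>"
    and "(ng + nh) / 2 \<le> (\<Sum>\<^sub>\<infinity>l\<in>\<Theta>. \<Phi> l)"
    and "(\<Sum>\<^sub>\<infinity>l\<in>\<Theta>. \<Phi> l) \<le> (2 * real N * (B1 + B2) + 2 * CS + 2 * CT) * (ng + nh)"
proof -
  note two_graphs = infsum_on_two_graphs_le[OF \<tau> \<sigma> a_\<Lambda>(1) a_S(1) b_\<Gamma>(1) b_T(1), folded \<Theta>_def \<Phi>_def]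
  show summable: "\<Phi> summable_on \<Theta>"
    by (rule two_graphs(1))
  have "real N * (\<Sum>\<^sub>\<infinity>l\<in>\<Lambda>. (cmod (a l))\<^sup>2) \<le> real N * (B1 * ng)"
    "real N * (\<Sum>\<^sub>\<infinity>l\<in>\<Gamma>. (cmod (b l))\<^sup>2) \<le> real N * (B2 * nh)"
    using a_\<Lambda>(3) b_\<Gamma>(3) by (simp_all add: mult_left_mono)
  moreover have "0 \<le> real N * (B1 * nh + B2 * ng) + CS * nh + CT * ng"
    using nonneg by simp
  ultimately show "(\<Sum>\<^sub>\<infinity>l\<in>\<Theta>. \<Phi> l) \<le> (2 * real N * (B1 + B2) + 2 * CS + 2 * CT) * (ng + nh)"
    using two_graphs(2) a_S(2) b_T(2) by (simp add: algebra_simps)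
  have "real N / 2 * (\<Sum>\<^sub>\<infinity>l\<in>\<Lambda>. (cmod (a l))\<^sup>2) \<le> (\<Sum>\<^sub>\<infinity>l\<in>\<Theta>. \<Phi> l) + (\<Sum>\<^sub>\<infinity>t\<in>T. (cmod (b t))\<^sup>2)"
    by (rule infsum_ge_on_graph[OF \<tau> _ _ _ summable _ a_\<Lambda>(1) b_T(1), where h = "\<lambda>p. (fst p, \<tau> p)"])
      (use \<tau>(1) in \<open>auto simp: \<Theta>_def \<Phi>_def inj_on_def\<close>)
  moreover have "real N / 2 * (\<Sum>\<^sub>\<infinity>l\<in>\<Gamma>. (cmod (b l))\<^sup>2) \<le> (\<Sum>\<^sub>\<infinity>l\<in>\<Theta>. \<Phi> l) + (\<Sum>\<^sub>\<infinity>t\<in>S. (cmod (a t))\<^sup>2)"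
    by (rule infsum_ge_on_graph[OF \<sigma> _ _ _ summable _ b_\<Gamma>(1) a_S(1), where h = "\<lambda>p. (\<sigma> p, fst p)"])
      (use \<sigma>(1) in \<open>auto simp: \<Theta>_def \<Phi>_def inj_on_def add.commute\<close>)
  moreover have "(CS + CT + 1) * ng \<le> real N / 2 * (A1 * ng)" "(CS + CT + 1) * nh \<le> real N / 2 * (A2 * nh)"
  proof -
    have "real N * min A1 A2 \<le> real N * A1" "real N * min A1 A2 \<le> real N * A2"
      by (simp_all add: mult_left_mono)
    then have "2 * (CS + CT + 1) * ng \<le> real N * A1 * ng" "2 * (CS + CT + 1) * nh \<le> real N * A2 * nh"
      using N nonneg(1,2) by (auto intro!: mult_right_mono)
    then show "(CS + CT + 1) * ng \<le> real N / 2 * (A1 * ng)" "(CS + CT + 1) * nh \<le> real N / 2 * (A2 * nh)"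
      by (simp_all add: algebra_simps)
  qed
  moreover have "real N / 2 * (A1 * ng) \<le> real N / 2 * (\<Sum>\<^sub>\<infinity>l\<in>\<Lambda>. (cmod (a l))\<^sup>2)"
    "real N / 2 * (A2 * nh) \<le> real N / 2 * (\<Sum>\<^sub>\<infinity>l\<in>\<Gamma>. (cmod (b l))\<^sup>2)"
    using a_\<Lambda>(2) b_\<Gamma>(2) by (simp_all add: mult_left_mono)
  moreover have "0 \<le> CT * ng" "0 \<le> CS * nh"
    using nonneg by simp_all
  ultimately show "(ng + nh) / 2 \<le> (\<Sum>\<^sub>\<infinity>l\<in>\<Theta>. \<Phi> l)"
    using a_S(2) b_T(2) by (simp add: algebra_simps)
qed

lemma infinite_fourier_bessel_set:
  fixes M :: "'a::euclidean_space measure"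
  assumes M: "cont_finite_borel M" and frame: "fourier_frame M \<Lambda>"
  obtains T C where "countable T" "infinite T" "0 \<le> C" "fourier_frame_bounds M T 0 C"
proof (cases "finite \<Lambda>")
  case False
  obtain A B where "0 < B" "fourier_frame_bounds M \<Lambda> A B"
    using frame by (auto simp: fourier_frame_iff_bounds)
  with False frame show ?thesis
    by (intro that[of \<Lambda> B]) (auto simp: fourier_frame_iff_bounds fourier_frame_bounds_zero_lower)
next
  case True
  then have null: "emeasure M (space M) = 0"
    using emeasure_space_eq_0_if_finite_frame[OF M frame] by simp
  have "L2_inner M f l = 0" "L2_norm_sq M f = 0" for f l
    unfolding L2_inner_def L2_norm_sq_def
    using null by (auto intro!: integral_eq_zero_AE AE_I[where N = "space M"])
  then have "fourier_frame_bounds M T 0 0" for T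
    by (simp add: fourier_frame_bounds_def)
  moreover obtain v :: 'a where "v \<noteq> 0"
    using nonzero_Basis by blast
  then have "infinite (range (\<lambda>n::nat. real n *\<^sub>R v))"
    by (intro range_inj_infinite) (auto simp: inj_on_def)
  ultimately show ?thesis
    using that[of "range (\<lambda>n::nat. real n *\<^sub>R v)" 0] by simp
qed

lemma inj_on_into_infinite:
  assumes "countable I" "infinite T"
  obtains \<tau> where "inj_on \<tau> I" "\<tau> ` I \<subseteq> T"
proof -
  obtain e :: "nat \<Rightarrow> 'b" where "inj e" "range e \<subseteq> T"
    using infinite_countable_subset[OF \<open>infinite T\<close>] by blast
  then show ?thesis
    using inj_on_to_nat_on[OF \<open>countable I\<close>]
    by (intro that[of "e \<circ> to_nat_on I"]) (auto intro: comp_inj_on inj_on_subset)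
qed

lemma fourier_frame_bounds_rho_measure:
  fixes \<mu> :: "'a::euclidean_space measure" and \<nu> :: "'b::euclidean_space measure"
    and \<tau> :: "'a \<times> nat \<Rightarrow> 'b" and \<sigma> :: "'b \<times> nat \<Rightarrow> 'a"
  assumes sets: "sets \<mu> = sets borel" "sets \<nu> = sets borel"
    and finite: "finite_measure \<mu>" "finite_measure \<nu>"
    and frame_\<mu>: "fourier_frame_bounds \<mu> \<Lambda> A1 B1" and frame_\<nu>: "fourier_frame_bounds \<nu> \<Gamma> A2 B2"
    and bessel_\<mu>: "fourier_frame_bounds \<mu> S 0 CS" and bessel_\<nu>: "fourier_frame_bounds \<nu> T 0 CT"
    and nonneg: "0 \<le> B1" "0 \<le> B2" "0 \<le> CS" "0 \<le> CT"
    and N: "2 * (CS + CT + 1) \<le> real N * min A1 A2"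
    and \<tau>: "inj_on \<tau> (\<Lambda> \<times> {..<N})" "\<tau> ` (\<Lambda> \<times> {..<N}) \<subseteq> T"
    and \<sigma>: "inj_on \<sigma> (\<Gamma> \<times> {..<N})" "\<sigma> ` (\<Gamma> \<times> {..<N}) \<subseteq> S"
  shows "fourier_frame_bounds (rho_measure \<mu> \<nu>)
    ((\<lambda>p. (fst p, \<tau> p)) ` (\<Lambda> \<times> {..<N}) \<union> (\<lambda>q. (\<sigma> q, fst q)) ` (\<Gamma> \<times> {..<N}))
    (1 / 2) (2 * real N * (B1 + B2) + 2 * CS + 2 * CT)"
  unfolding fourier_frame_bounds_def
proof
  let ?\<rho> = "rho_measure \<mu> \<nu>"
    and ?\<Theta> = "(\<lambda>p. (fst p, \<tau> p)) ` (\<Lambda> \<times> {..<N}) \<union> (\<lambda>q. (\<sigma> q, fst q)) ` (\<Gamma> \<times> {..<N})"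
    and ?B = "2 * real N * (B1 + B2) + 2 * CS + 2 * CT"
  fix f assume f: "f \<in> L2 ?\<rho>"
  define g where "g = (\<lambda>x. f (x, 0))"
  define h where "h = (\<lambda>y. f (0, y))"
  have "g \<in> L2 \<mu>" "h \<in> L2 \<nu>"
    unfolding g_def h_def using L2_rho_measure_slices[OF sets f] by auto
  then have "L2_norm_sq \<mu> g \<ge> 0" "L2_norm_sq \<nu> h \<ge> 0"
    and bounds_g: "(\<lambda>l. (cmod (L2_inner \<mu> g (expo l)))\<^sup>2) summable_on \<Lambda>"
      "A1 * L2_norm_sq \<mu> g \<le> (\<Sum>\<^sub>\<infinity>l\<in>\<Lambda>. (cmod (L2_inner \<mu> g (expo l)))\<^sup>2)"
      "(\<Sum>\<^sub>\<infinity>l\<in>\<Lambda>. (cmod (L2_inner \<mu> g (expo l)))\<^sup>2) \<le> B1 * L2_norm_sq \<mu> g"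
      "(\<lambda>l. (cmod (L2_inner \<mu> g (expo l)))\<^sup>2) summable_on S"
      "(\<Sum>\<^sub>\<infinity>l\<in>S. (cmod (L2_inner \<mu> g (expo l)))\<^sup>2) \<le> CS * L2_norm_sq \<mu> g"
    and bounds_h: "(\<lambda>l. (cmod (L2_inner \<nu> h (expo l)))\<^sup>2) summable_on \<Gamma>"
      "A2 * L2_norm_sq \<nu> h \<le> (\<Sum>\<^sub>\<infinity>l\<in>\<Gamma>. (cmod (L2_inner \<nu> h (expo l)))\<^sup>2)"
      "(\<Sum>\<^sub>\<infinity>l\<in>\<Gamma>. (cmod (L2_inner \<nu> h (expo l)))\<^sup>2) \<le> B2 * L2_norm_sq \<nu> h"
      "(\<lambda>l. (cmod (L2_inner \<nu> h (expo l)))\<^sup>2) summable_on T"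
      "(\<Sum>\<^sub>\<infinity>l\<in>T. (cmod (L2_inner \<nu> h (expo l)))\<^sup>2) \<le> CT * L2_norm_sq \<nu> h"
    using frame_\<mu> frame_\<nu> bessel_\<mu> bessel_\<nu>
    by (auto simp: fourier_frame_bounds_def L2_norm_sq_def)
  moreover have "L2_norm_sq (rho_measure \<mu> \<nu>) f = L2_norm_sq \<mu> g + L2_norm_sq \<nu> h"
    unfolding g_def h_def by (rule L2_norm_sq_rho_measure[OF sets f])
  moreover have "(cmod (L2_inner (rho_measure \<mu> \<nu>) f (expo l)))\<^sup>2 =
      (cmod (L2_inner \<mu> g (expo (fst l)) + L2_inner \<nu> h (expo (snd l))))\<^sup>2" for l
    using L2_inner_rho_measure_expo[OF sets finite f, of "fst l" "snd l"] by (simp add: g_def h_def)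
  ultimately show "(\<lambda>l. (cmod (L2_inner ?\<rho> f (expo l)))\<^sup>2) summable_on ?\<Theta> \<and>
    1 / 2 * L2_norm_sq ?\<rho> f \<le> (\<Sum>\<^sub>\<infinity>l\<in>?\<Theta>. (cmod (L2_inner ?\<rho> f (expo l)))\<^sup>2) \<and>
    (\<Sum>\<^sub>\<infinity>l\<in>?\<Theta>. (cmod (L2_inner ?\<rho> f (expo l)))\<^sup>2) \<le> ?B * L2_norm_sq ?\<rho> f"
    using frame_bounds_on_two_graphs[OF \<tau> \<sigma> bounds_g(1-3) bounds_g(4-5) bounds_h(1-3) bounds_h(4-5)
        _ _ nonneg N]
    by simp
qed

lemma admits_fourier_frame_rho_measure:
  fixes \<mu> :: "'a::euclidean_space measure" and \<nu> :: "'b::euclidean_space measure"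
  assumes sets: "sets \<mu> = sets borel" "sets \<nu> = sets borel"
    and finite: "finite_measure \<mu>" "finite_measure \<nu>"
    and frame_\<mu>: "countable \<Lambda>" "0 < A1" "0 < B1" "fourier_frame_bounds \<mu> \<Lambda> A1 B1"
    and frame_\<nu>: "countable \<Gamma>" "0 < A2" "0 < B2" "fourier_frame_bounds \<nu> \<Gamma> A2 B2"
    and bessel_\<mu>: "infinite S" "0 \<le> CS" "fourier_frame_bounds \<mu> S 0 CS"
    and bessel_\<nu>: "infinite T" "0 \<le> CT" "fourier_frame_bounds \<nu> T 0 CT"
  shows "admits_fourier_frame (rho_measure \<mu> \<nu>)"
proof -
  obtain N :: nat where "2 * (CS + CT + 1) / min A1 A2 < N"
    using reals_Archimedean2 by blast
  then have N: "2 * (CS + CT + 1) \<le> real N * min A1 A2"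
    using frame_\<mu>(2) frame_\<nu>(2) by (simp add: divide_less_eq)
  then have "0 < real N"
    using bessel_\<mu>(2) bessel_\<nu>(2) by (cases "N = 0") auto
  obtain \<tau> :: "'a \<times> nat \<Rightarrow> 'b" where \<tau>: "inj_on \<tau> (\<Lambda> \<times> {..<N})" "\<tau> ` (\<Lambda> \<times> {..<N}) \<subseteq> T"
    using inj_on_into_infinite[of "\<Lambda> \<times> {..<N}" T] frame_\<mu>(1) bessel_\<nu>(1) by auto
  obtain \<sigma> :: "'b \<times> nat \<Rightarrow> 'a" where \<sigma>: "inj_on \<sigma> (\<Gamma> \<times> {..<N})" "\<sigma> ` (\<Gamma> \<times> {..<N}) \<subseteq> S"
    using inj_on_into_infinite[of "\<Gamma> \<times> {..<N}" S] frame_\<nu>(1) bessel_\<mu>(1) by auto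
  define \<Theta> where "\<Theta> = (\<lambda>p. (fst p, \<tau> p)) ` (\<Lambda> \<times> {..<N}) \<union> (\<lambda>q. (\<sigma> q, fst q)) ` (\<Gamma> \<times> {..<N})"
  define B where "B = 2 * real N * (B1 + B2) + 2 * CS + 2 * CT"
  have "fourier_frame_bounds (rho_measure \<mu> \<nu>) \<Theta> (1 / 2) B"
    unfolding \<Theta>_def B_def using frame_\<mu> frame_\<nu> bessel_\<mu> bessel_\<nu>
    by (intro fourier_frame_bounds_rho_measure[OF sets finite _ _ _ _ _ _ _ _ N \<tau> \<sigma>]) auto
  moreover have "countable \<Theta>"
    using frame_\<mu>(1) frame_\<nu>(1) by (simp add: \<Theta>_def)
  moreover have "0 < B"
    using \<open>0 < real N\<close> frame_\<mu>(3) frame_\<nu>(3) bessel_\<mu>(2) bessel_\<nu>(2) unfolding B_def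
    by (intro add_pos_nonneg) auto
  ultimately have "fourier_frame (rho_measure \<mu> \<nu>) \<Theta>"
    unfolding fourier_frame_iff_bounds by (intro conjI exI[of _ "1 / 2"] exI[of _ B]) auto
  then show ?thesis
    unfolding admits_fourier_frame_def by blast
qed

theorem theorem2p1:
  fixes \<mu> :: "'a::euclidean_space measure" and \<nu> :: "'b::euclidean_space measure"
  assumes "cont_finite_borel \<mu>" and "cont_finite_borel \<nu>"
    and "admits_fourier_frame \<mu>" and "admits_fourier_frame \<nu>"
  shows "admits_fourier_frame (rho_measure \<mu> \<nu>)"
proof -
  obtain \<Lambda> \<Gamma> where frames: "fourier_frame \<mu> \<Lambda>" "fourier_frame \<nu> \<Gamma>"
    using assms(3,4) by (auto simp: admits_fourier_frame_def)
  obtain S CS T CT where "infinite S" "0 \<le> CS" "fourier_frame_bounds \<mu> S 0 CS"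
    and "infinite T" "0 \<le> CT" "fourier_frame_bounds \<nu> T 0 CT"
    using infinite_fourier_bessel_set[OF assms(1) frames(1)]
      infinite_fourier_bessel_set[OF assms(2) frames(2)] by metis
  with frames assms(1,2) show ?thesis
    unfolding fourier_frame_iff_bounds cont_finite_borel_def
    by (elim conjE exE) (rule admits_fourier_frame_rho_measure)
qed

end
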